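(* Let $(\mathcal S,\mathcal Q,\Theta)$ be a Pufferfish scenario, $(\mathcal U,\omega)$ a continuous or finite slice profile, $\alpha>1$, $\epsilon>0$, and $f:\mathcal X\to\mathbb R^d$ a query. Let $\overline\Delta^2:=\int_{\mathbb S^{d-1}}(\Delta^u_\infty)^2\,d\omega(u)$. Then the mechanism $\mathcal M(X)=f(X)+N$, with $N\sim\mathcal N\!\left(0,\frac{\alpha\overline\Delta^2}{2\epsilon}I_d\right)$ independent of $X$, satisfies $(\alpha,\epsilon,\omega)$-Ave-SRPP in $(\mathcal S,\mathcal Q,\Theta)$.
   Context: Pufferfish scenario: secrets $\mathcal S$, pairs $\mathcal Q\subseteq\mathcal S\times\mathcal S$, priors $\Theta$; each $\theta$ is a joint law of secret $S$ and dataset $X$, with secret marginal $P^S_\theta$. $P^{f,s}_\theta$ is the law of $f(X)$ given $S=s$ under $\theta$; $\mathcal M^\theta_s$ the law of $\mathcal M(X)$ given $S=s$ under $\theta$. Slice profile $(\mathcal U,\omega)$: $\mathcal U\subseteq\mathbb S^{d-1}$ (unit sphere), $\omega$ a probability measure on $\mathbb S^{d-1}$ supported on $\mathcal U$. $\Psi^u(a)=\langle a,u\rangle$; $\Psi^u_\#$ pushforward. For measures on $\mathbb R$, $W_\infty(\nu,\mu)=\inf_{\pi\in\Pi(\nu,\mu)}\sup_{(x,y)\in\mathrm{supp}\,\pi}|x-y|$. Per-slice sensitivity: $\Delta^u_\infty:=\max_{(s_i,s_j)\in\mathcal Q,\theta\in\Theta}W_\infty(\Psi^u_\#P^{f,s_i}_\theta,\Psi^u_\#P^{f,s_j}_\theta)$.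 R\'enyi divergence $\mathtt D_\alpha(P\|Q)=\frac1{\alpha-1}\log\mathbb E_Q[(dP/dQ)^\alpha]$. $\mathtt{AveSD}^\omega_\alpha(P\|Q)=\int\mathtt D_\alpha(\Psi^u_\#P\|\Psi^u_\#Q)\,d\omega(u)$. $\mathcal M$ is $(\alpha,\epsilon,\omega)$-Ave-SRPP in $(\mathcal S,\mathcal Q,\Theta)$ if $\mathtt{AveSD}^\omega_\alpha(\mathcal M^\theta_{s_i}\|\mathcal M^\theta_{s_j})\le\epsilon$ for all $\theta\in\Theta$ and $(s_i,s_j)\in\mathcal Q$ with $P^S_\theta(s_i),P^S_\theta(s_j)>0$. *)

theory Defs
  imports "HOL-Probability.Probability"
begin

text \<open>Secrets of type 's, datasets of type 'x living in the measurable space Xsp.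
A prior theta is a probability measure on (secret, dataset) pairs; secrets carry the
discrete sigma-algebra.\<close>

definition pufferfish_scenario ::
  "'s set \<Rightarrow> ('s \<times> 's) set \<Rightarrow> ('s \<times> 'x) measure set \<Rightarrow> 'x measure \<Rightarrow> bool" where
  "pufferfish_scenario S Q \<Theta> Xsp \<longleftrightarrow>
     Q \<subseteq> S \<times> S \<and>
     (\<forall>\<theta>\<in>\<Theta>. prob_space \<theta> \<and> sets \<theta> = sets (count_space UNIV \<Otimes>\<^sub>M Xsp)
              \<and> emeasure \<theta> (S \<times> space Xsp) = 1)"

definition secret_event :: "('s \<times> 'x) measure \<Rightarrow> 's \<Rightarrow> ('s \<times> 'x) set" where
  "secret_event \<theta> s = {p \<in> space \<theta>. fst p = s}"

definition prior_secret :: "('s \<times> 'x) measure \<Rightarrow> 's \<Rightarrow> real" where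
  "prior_secret \<theta> s = measure \<theta> (secret_event \<theta> s)"

text \<open>Conditional law of (S,X) given S = s (meaningful when prior_secret theta s > 0).\<close>
definition cond_secret :: "('s \<times> 'x) measure \<Rightarrow> 's \<Rightarrow> ('s \<times> 'x) measure" where
  "cond_secret \<theta> s =
     density \<theta> (\<lambda>p. indicator (secret_event \<theta> s) p / emeasure \<theta> (secret_event \<theta> s))"

definition query_law :: "('s \<times> 'x) measure \<Rightarrow> ('x \<Rightarrow> 'a::euclidean_space) \<Rightarrow> 's \<Rightarrow> 'a measure" where
  "query_law \<theta> f s = distr (cond_secret \<theta> s) borel (\<lambda>p. f (snd p))"

text \<open>M^theta_s: law of the output of a randomized mechanism (Markov kernel K, whose
randomness is independent of the data) given S = s.\<close>
definition mech_law :: "('s \<times> 'x) measure \<Rightarrow> ('x \<Rightarrow> 'a measure) \<Rightarrow> 's \<Rightarrow> 'a measure" where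
  "mech_law \<theta> K s = cond_secret \<theta> s \<bind> (\<lambda>p. K (snd p))"

definition slice :: "'a::euclidean_space measure \<Rightarrow> 'a \<Rightarrow> real measure" where
  "slice P u = distr P borel (\<lambda>a. a \<bullet> u)"

definition slice_profile :: "'a::euclidean_space set \<Rightarrow> 'a measure \<Rightarrow> bool" where
  "slice_profile U \<omega> \<longleftrightarrow>
     U \<subseteq> sphere 0 1 \<and> U \<in> sets borel \<and> prob_space \<omega> \<and> sets \<omega> = sets borel \<and>
     emeasure \<omega> U = 1"

definition couplings :: "real measure \<Rightarrow> real measure \<Rightarrow> (real \<times> real) measure set" where
  "couplings \<nu> \<mu> = {\<pi>. prob_space \<pi> \<and> sets \<pi> = sets (borel :: (real \<times> real) measure) \<and>
                        distr \<pi> borel fst = \<nu> \<and> distr \<pi> borel snd = \<mu>}"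

definition msupport :: "'a::metric_space measure \<Rightarrow> 'a set" where
  "msupport \<pi> = {z. \<forall>e>0. emeasure \<pi> (ball z e) > 0}"

definition W_inf :: "real measure \<Rightarrow> real measure \<Rightarrow> ennreal" where
  "W_inf \<nu> \<mu> = (INF \<pi> \<in> couplings \<nu> \<mu>. SUP z \<in> msupport \<pi>. ennreal \<bar>fst z - snd z\<bar>)"

text \<open>Per-slice sensitivity Delta^u_infty (sup over pairs in Q and priors, restricted to
secrets of positive prior probability so that the conditional laws are defined).\<close>
definition slice_sens ::
  "('s \<times> 's) set \<Rightarrow> ('s \<times> 'x) measure set \<Rightarrow> ('x \<Rightarrow> 'a::euclidean_space) \<Rightarrow> 'a \<Rightarrow> ennreal" where
  "slice_sens Q \<Theta> f u =
     (SUP (\<theta>, si, sj) \<in> {(\<theta>, si, sj). \<theta> \<in> \<Theta> \<and> (si, sj) \<in> Q \<and>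
                                   prior_secret \<theta> si > 0 \<and> prior_secret \<theta> sj > 0}.
        W_inf (slice (query_law \<theta> f si) u) (slice (query_law \<theta> f sj) u))"

definition renyi_div :: "real \<Rightarrow> real measure \<Rightarrow> real measure \<Rightarrow> ennreal" where
  "renyi_div \<alpha> P Q =
     (if absolutely_continuous Q P then
        (let I = (\<integral>\<^sup>+ x. ennreal ((enn2real (RN_deriv Q P x)) powr \<alpha>) \<partial>Q)
         in if I = \<infinity> then \<infinity> else ennreal (ln (enn2real I) / (\<alpha> - 1)))
      else \<infinity>)"

definition AveSD :: "'a::euclidean_space measure \<Rightarrow> real \<Rightarrow> 'a measure \<Rightarrow> 'a measure \<Rightarrow> ennreal" where
  "AveSD \<omega> \<alpha> P Q = (\<integral>\<^sup>+ u. renyi_div \<alpha> (slice P u) (slice Q u) \<partial>\<omega>)"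

definition ave_srpp ::
  "real \<Rightarrow> real \<Rightarrow> 'a::euclidean_space measure \<Rightarrow> ('s \<times> 's) set \<Rightarrow> ('s \<times> 'x) measure set
     \<Rightarrow> ('x \<Rightarrow> 'a measure) \<Rightarrow> bool" where
  "ave_srpp \<alpha> \<epsilon> \<omega> Q \<Theta> K \<longleftrightarrow>
     (\<forall>\<theta>\<in>\<Theta>. \<forall>(si, sj)\<in>Q. prior_secret \<theta> si > 0 \<longrightarrow> prior_secret \<theta> sj > 0 \<longrightarrow>
        AveSD \<omega> \<alpha> (mech_law \<theta> K si) (mech_law \<theta> K sj) \<le> ennreal \<epsilon>)"

definition gaussian_noise :: "real \<Rightarrow> 'a::euclidean_space measure" where
  "gaussian_noise s2 =
     (if s2 = 0 then return borel 0
      else density lborel (\<lambda>x. ennreal ((2 * pi * s2) powr (- real DIM('a) / 2)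
                                          * exp (- (norm x)\<^sup>2 / (2 * s2)))))"

definition gaussian_mech :: "('x \<Rightarrow> 'a::euclidean_space) \<Rightarrow> real \<Rightarrow> 'x \<Rightarrow> 'a measure" where
  "gaussian_mech f s2 x = distr (gaussian_noise s2) borel (\<lambda>n. f x + n)"

end

theory Submission
  imports Defs
begin

text \<open>
  For a unit vector \<open>u\<close> the slice of \<open>\<N>(0, s2 I)\<close> is \<open>\<N>(0, s2)\<close>, so each slice of the
  output law of the mechanism is the corresponding slice of the query law smoothed by a
  one-dimensional Gaussian. A coupling of two slice laws whose support stays within distance \<open>c\<close> of
  the diagonal exhibits both smoothed laws as mixtures, over the same coupling, of normal laws with
  means at most \<open>c\<close> apart. Joint convexity of \<open>(a, b) \<mapsto> a powr \<alpha> * b powr (1 - \<alpha>)\<close> then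
  bounds their Renyi divergence by \<open>\<alpha> c\<^sup>2 / (2 s2)\<close>, the divergence of two such normal laws.
  Optimising over couplings bounds the divergence of almost every slice by
  \<open>\<alpha> (\<Delta>\<^sup>u\<^sub>\<infinity>)\<^sup>2 / (2 s2)\<close>, and integrating against \<open>\<omega>\<close> with the chosen variance gives \<open>\<epsilon>\<close>.
  If the averaged sensitivity vanishes there is no noise at all, and then the slices of the two
  query laws agree for \<open>\<omega>\<close>-almost every direction.
\<close>

lemma powr_ge_tangent:
  fixes \<alpha> r t :: real
  assumes "\<alpha> \<ge> 1" and "r > 0" and "t > 0"
  shows "\<alpha> * r powr (\<alpha> - 1) * t - (\<alpha> - 1) * r powr \<alpha> \<le> t powr \<alpha>"
proof -
  have "\<alpha> * r powr (\<alpha> - 1) * (t - r) \<le> t powr \<alpha> - r powr \<alpha>"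
    using assms
    by (intro convex_on_imp_above_tangent[OF powr_convex])
       (auto intro!: derivative_eq_intros simp: powr_diff interior_open)
  moreover have "r powr \<alpha> = r powr (\<alpha> - 1) * r"
    using assms by (simp add: powr_diff)
  ultimately show ?thesis
    by (simp add: algebra_simps)
qed

lemma (in prob_space) integral_pos:
  fixes f :: "'a \<Rightarrow> real"
  assumes f: "integrable M f" and pos: "\<And>x. 0 < f x"
  shows "0 < (\<integral>x. f x \<partial>M)"
proof -
  have "(\<integral>x. f x \<partial>M) \<noteq> 0"
  proof
    assume "(\<integral>x. f x \<partial>M) = 0"
    then have "AE x in M. f x = 0"
      using integral_nonneg_eq_0_iff_AE[OF f] pos by (auto intro: less_imp_le)
    then have "AE x in M. False"
      by (rule eventually_mono) (metis pos less_irrefl)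
    then show False
      by simp
  qed
  moreover have "0 \<le> (\<integral>x. f x \<partial>M)"
    using pos by (intro integral_nonneg_AE) (auto intro: less_imp_le)
  ultimately show ?thesis by linarith
qed

text \<open>Jensen's inequality for the jointly convex function \<open>(a, b) \<mapsto> a powr \<alpha> * b powr (1 - \<alpha>)\<close>,
  via its supporting hyperplane at the point of means.\<close>
lemma (in prob_space) jensen_powr_perspective:
  fixes \<alpha> :: real and A B :: "'a \<Rightarrow> real"
  assumes \<alpha>: "\<alpha> > 1" and A: "integrable M A" and B: "integrable M B"
    and A_pos: "\<And>x. 0 < A x" and B_pos: "\<And>x. 0 < B x"
  shows "ennreal ((\<integral>x. A x \<partial>M) powr \<alpha> * (\<integral>x. B x \<partial>M) powr (1 - \<alpha>))
     \<le> (\<integral>\<^sup>+ x. ennreal (A x powr \<alpha> * B x powr (1 - \<alpha>)) \<partial>M)"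
proof -
  define a b where "a = (\<integral>x. A x \<partial>M)" and "b = (\<integral>x. B x \<partial>M)"
  have a: "a > 0" and b: "b > 0"
    unfolding a_def b_def using A B A_pos B_pos by (auto intro!: integral_pos)
  define r where "r = a / b"
  have r: "r > 0" using a b by (simp add: r_def)
  define L where "L = (\<lambda>x. \<alpha> * r powr (\<alpha> - 1) * A x - (\<alpha> - 1) * r powr \<alpha> * B x)"
  define h where "h = (\<lambda>x. A x powr \<alpha> * B x powr (1 - \<alpha>))"
  have L_le_h: "L x \<le> h x" for x
  proof -
    have "B x * (\<alpha> * r powr (\<alpha> - 1) * (A x / B x) - (\<alpha> - 1) * r powr \<alpha>) \<le> B x * (A x / B x) powr \<alpha>"
      using powr_ge_tangent[of \<alpha> r "A x / B x"] \<alpha> r A_pos[of x] B_pos[of x]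
      by (intro mult_left_mono) auto
    then show ?thesis
      using A_pos[of x] B_pos[of x] by (simp add: L_def h_def powr_divide powr_diff field_simps)
  qed
  have integral_L: "(\<integral>x. L x \<partial>M) = a powr \<alpha> * b powr (1 - \<alpha>)"
  proof -
    have "(\<integral>x. L x \<partial>M) = \<alpha> * r powr (\<alpha> - 1) * a - (\<alpha> - 1) * r powr \<alpha> * b"
      unfolding L_def a_def b_def using A B by simp
    also have "\<dots> = r powr \<alpha> * b"
      using a b by (simp add: r_def powr_diff field_simps)
    also have "\<dots> = a powr \<alpha> * b powr (1 - \<alpha>)"
      using a b by (simp add: r_def powr_divide powr_diff field_simps)
    finally show ?thesis .
  qed
  show ?thesis
  proof (cases "(\<integral>\<^sup>+ x. ennreal (h x) \<partial>M) = \<infinity>")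
    case False
    have "h \<in> borel_measurable M"
      unfolding h_def using A B by measurable
    then have h: "integrable M h"
      using False by (intro integrableI_nonneg) (auto simp: h_def top.not_eq_extremum)
    have "a powr \<alpha> * b powr (1 - \<alpha>) \<le> (\<integral>x. h x \<partial>M)"
      unfolding integral_L[symmetric] using A B h L_le_h by (intro integral_mono) (auto simp: L_def)
    then have "ennreal (a powr \<alpha> * b powr (1 - \<alpha>)) \<le> ennreal (\<integral>x. h x \<partial>M)"
      by (rule ennreal_leI)
    also have "\<dots> = (\<integral>\<^sup>+ x. ennreal (h x) \<partial>M)"
      using h by (intro nn_integral_eq_integral[symmetric]) (auto simp: h_def)
    finally show ?thesis
      by (simp add: a_def b_def h_def)
  qed (simp add: h_def)
qed

lemma nn_integral_cmult_le:
  fixes c :: ennreal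
  assumes "c \<noteq> 0" and "c \<noteq> \<infinity>"
  shows "(\<integral>\<^sup>+ x. c * f x \<partial>M) \<le> c * integral\<^sup>N M f"
  unfolding nn_integral_def
proof (rule SUP_least)
  fix g assume "g \<in> {g. simple_function M g \<and> g \<le> (\<lambda>x. c * f x)}"
  then have g: "simple_function M g" "\<And>x. g x \<le> c * f x"
    by (auto simp: le_fun_def)
  define h where "h x = g x / c" for x
  have h: "simple_function M h"
    unfolding h_def by (rule simple_function_compose1[OF g(1)])
  have g_eq: "g x = c * h x" for x
    unfolding h_def using assms by (simp add: ennreal_times_divide mult.commute[of c] mult_divide_eq_ennreal)
  have "h \<le> f"
    using g(2) assms by (auto simp: le_fun_def g_eq ennreal_mult_le_mult_iff)
  then have "integral\<^sup>S M g \<le> c * (SUP g \<in> {g. simple_function M g \<and> g \<le> f}. integral\<^sup>S M g)"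
    using h by (auto simp: g_eq[abs_def] intro!: mult_left_mono SUP_upper)
  then show "integral\<^sup>S M g \<le> c * (SUP g \<in> {g. simple_function M g \<and> g \<le> f}. integral\<^sup>S M g)" .
qed

section \<open>Renyi divergence of laws with densities\<close>

lemma renyi_div_self:
  assumes "prob_space P"
  shows "renyi_div \<alpha> P P = 0"
proof -
  interpret prob_space P by fact
  have "AE x in P. 1 = RN_deriv P P x"
    by (rule RN_deriv_unique) (auto simp: density_1)
  then have "(\<integral>\<^sup>+ x. ennreal ((enn2real (RN_deriv P P x)) powr \<alpha>) \<partial>P) = (\<integral>\<^sup>+ x. 1 \<partial>P)"
    by (intro nn_integral_cong_AE) (auto elim!: eventually_mono dest: sym)
  then show ?thesis
    by (simp add: renyi_div_def absolutely_continuous_def emeasure_space_1)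
qed

lemma renyi_div_density:
  fixes M :: "real measure" and a b :: "real \<Rightarrow> real"
  assumes M: "sigma_finite_measure M"
    and [measurable]: "a \<in> borel_measurable M" "b \<in> borel_measurable M"
    and a_nonneg: "\<And>z. 0 \<le> a z" and b_pos: "\<And>z. 0 < b z"
  shows "renyi_div \<alpha> (density M a) (density M b) =
    (let I = \<integral>\<^sup>+ z. ennreal (a z powr \<alpha> * b z powr (1 - \<alpha>)) \<partial>M
     in if I = \<infinity> then \<infinity> else ennreal (ln (enn2real I) / (\<alpha> - 1)))"
proof -
  let ?P = "density M a" and ?Q = "density M b"
  have Q: "sigma_finite_measure ?Q"
    by (subst sigma_finite_measure.sigma_finite_iff_density_finite[OF M]) auto
  have ac: "absolutely_continuous ?Q ?P"
    unfolding absolutely_continuous_def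
  proof
    fix A assume "A \<in> null_sets ?Q"
    then have "A \<in> sets M" "AE z in M. z \<in> A \<longrightarrow> ennreal (b z) = 0"
      by (auto simp: null_sets_density_iff)
    then show "A \<in> null_sets ?P"
      using b_pos by (auto simp: null_sets_density_iff less_le elim!: eventually_mono)
  qed
  have "density ?Q (\<lambda>z. ennreal (a z / b z)) = ?P"
  proof -
    have "ennreal (b z) * ennreal (a z / b z) = ennreal (a z)" for z
      using a_nonneg[of z] b_pos[of z] by (simp flip: ennreal_mult)
    then show ?thesis
      by (subst density_density_eq) auto
  qed
  then have "AE z in ?Q. ennreal (a z / b z) = RN_deriv ?Q ?P z"
    by (intro sigma_finite_measure.RN_deriv_unique[OF Q]) auto
  then have "(\<integral>\<^sup>+ z. ennreal (enn2real (RN_deriv ?Q ?P z) powr \<alpha>) \<partial>?Q)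
      = (\<integral>\<^sup>+ z. ennreal ((a z / b z) powr \<alpha>) \<partial>?Q)"
  proof (intro nn_integral_cong_AE, elim eventually_mono)
    fix z assume RN: "ennreal (a z / b z) = RN_deriv ?Q ?P z"
    have "0 \<le> a z / b z"
      using a_nonneg[of z] b_pos[of z] by simp
    then show "ennreal (enn2real (RN_deriv ?Q ?P z) powr \<alpha>) = ennreal ((a z / b z) powr \<alpha>)"
      by (simp flip: RN)
  qed
  also have "\<dots> = (\<integral>\<^sup>+ z. ennreal (b z) * ennreal ((a z / b z) powr \<alpha>) \<partial>M)"
    by (intro nn_integral_density) auto
  also have "\<dots> = (\<integral>\<^sup>+ z. ennreal (a z powr \<alpha> * b z powr (1 - \<alpha>)) \<partial>M)"
    using a_nonneg b_pos
    by (intro nn_integral_cong)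
       (simp add: ennreal_mult''[symmetric] powr_divide powr_diff field_simps less_imp_le)
  finally show ?thesis
    unfolding renyi_div_def using ac by (simp add: Let_def)
qed

lemma renyi_div_density_le:
  fixes M :: "real measure" and a b :: "real \<Rightarrow> real"
  assumes "sigma_finite_measure M" "a \<in> borel_measurable M" "b \<in> borel_measurable M"
    and "\<And>z. 0 \<le> a z" and "\<And>z. 0 < b z" and \<alpha>: "\<alpha> > 1" and r: "r \<ge> 0"
    and bound: "(\<integral>\<^sup>+ z. ennreal (a z powr \<alpha> * b z powr (1 - \<alpha>)) \<partial>M) \<le> ennreal (exp ((\<alpha> - 1) * r))"
  shows "renyi_div \<alpha> (density M a) (density M b) \<le> ennreal r"
proof -
  define I where "I = (\<integral>\<^sup>+ z. ennreal (a z powr \<alpha> * b z powr (1 - \<alpha>)) \<partial>M)"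
  have fin: "I \<noteq> \<infinity>" and "enn2real I \<le> exp ((\<alpha> - 1) * r)"
    using bound by (auto simp: I_def top_unique enn2real_leI)
  then have "ln (enn2real I) \<le> (\<alpha> - 1) * r"
  proof (cases "enn2real I = 0")
    case False
    then have "ln (enn2real I) \<le> ln (exp ((\<alpha> - 1) * r))"
      using \<open>enn2real I \<le> exp ((\<alpha> - 1) * r)\<close>
      by (subst ln_le_cancel_iff) (auto simp: less_le)
    then show ?thesis
      by simp
  qed (use \<alpha> r in simp)
  then have "ln (enn2real I) / (\<alpha> - 1) \<le> r"
    using \<alpha> by (simp add: divide_le_eq mult.commute)
  then show ?thesis
    using fin by (simp add: renyi_div_density[OF assms(1-5)] I_def[symmetric] ennreal_leI)
qed

section \<open>Normal laws on the real line\<close>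

definition normal_measure :: "real \<Rightarrow> real \<Rightarrow> real measure" where
  "normal_measure \<mu> \<sigma> = density lborel (normal_density \<mu> \<sigma>)"

lemma sets_normal_measure [simp, measurable_cong]: "sets (normal_measure \<mu> \<sigma>) = sets borel"
  by (simp add: normal_measure_def)

lemma prob_space_normal_measure: "\<sigma> > 0 \<Longrightarrow> prob_space (normal_measure \<mu> \<sigma>)"
  by (simp add: normal_measure_def prob_space_normal_density)

lemma distr_translate_normal_measure:
  "distr (normal_measure \<mu> \<sigma>) borel (\<lambda>t. x + t) = normal_measure (x + \<mu>) \<sigma>"
proof (rule measure_eqI)
  fix A assume "A \<in> sets (distr (normal_measure \<mu> \<sigma>) borel (\<lambda>t. x + t))"
  then have A: "A \<in> sets borel" by simp
  have "(\<lambda>t. x + t) -` A \<in> sets borel"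
    by (rule measurable_sets_borel[OF _ A]) simp
  then have "emeasure (distr (normal_measure \<mu> \<sigma>) borel (\<lambda>t. x + t)) A
      = (\<integral>\<^sup>+ t. ennreal (normal_density \<mu> \<sigma> t) * indicator A (x + t) \<partial>lborel)"
    using A unfolding normal_measure_def
    by (subst emeasure_distr, simp_all, subst emeasure_density)
       (auto intro!: nn_integral_cong split: split_indicator)
  also have "\<dots> = (\<integral>\<^sup>+ z. ennreal (normal_density (x + \<mu>) \<sigma> z) * indicator A z \<partial>lborel)"
    using A
    by (subst nn_integral_real_affine[where c=1 and t=x, of "\<lambda>z. ennreal (normal_density (x + \<mu>) \<sigma> z) * indicator A z"])
       (auto simp: normal_density_def)
  also have "\<dots> = emeasure (normal_measure (x + \<mu>) \<sigma>) A"
    using A by (simp add: normal_measure_def emeasure_density)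
  finally show "emeasure (distr (normal_measure \<mu> \<sigma>) borel (\<lambda>t. x + t)) A = emeasure (normal_measure (x + \<mu>) \<sigma>) A" .
qed simp

lemma measurable_normal_measure:
  assumes "\<sigma> > 0"
  shows "(\<lambda>x. normal_measure x \<sigma>) \<in> borel \<rightarrow>\<^sub>M subprob_algebra borel"
proof -
  have "normal_measure 0 \<sigma> \<in> space (subprob_algebra borel)"
    using prob_space_imp_subprob_space[OF prob_space_normal_measure[OF assms]]
    by (auto simp: space_subprob_algebra)
  then have "(\<lambda>x. distr (normal_measure 0 \<sigma>) borel (\<lambda>t. x + t)) \<in> borel \<rightarrow>\<^sub>M subprob_algebra borel"
    by (intro measurable_distr2[where M=borel]) auto
  then show ?thesis
    by (simp add: distr_translate_normal_measure)
qed

lemma normal_density_powr_mult: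
  fixes \<sigma> \<alpha> x y z :: real
  assumes "\<sigma> > 0"
  shows "normal_density x \<sigma> z powr \<alpha> * normal_density y \<sigma> z powr (1 - \<alpha>)
       = exp (\<alpha> * (\<alpha> - 1) * (x - y)\<^sup>2 / (2 * \<sigma>\<^sup>2)) * normal_density (\<alpha> * x + (1 - \<alpha>) * y) \<sigma> z"
proof -
  define k where "k = 1 / sqrt (2 * pi * \<sigma>\<^sup>2)"
  have "k > 0"
    using assms by (simp add: k_def)
  then have normal_density_exp: "normal_density m \<sigma> z = exp (ln k - (z - m)\<^sup>2 / (2 * \<sigma>\<^sup>2))" for m
    by (simp add: normal_density_def k_def exp_diff exp_minus field_simps)
  have "\<alpha> * (ln k - (z - x)\<^sup>2 / (2 * \<sigma>\<^sup>2)) + (1 - \<alpha>) * (ln k - (z - y)\<^sup>2 / (2 * \<sigma>\<^sup>2))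
      = \<alpha> * (\<alpha> - 1) * (x - y)\<^sup>2 / (2 * \<sigma>\<^sup>2) + (ln k - (z - (\<alpha> * x + (1 - \<alpha>) * y))\<^sup>2 / (2 * \<sigma>\<^sup>2))"
    using assms by (simp add: field_simps power2_eq_square)
  then show ?thesis
    unfolding normal_density_exp by (simp add: powr_def exp_add[symmetric])
qed

lemma nn_integral_normal_density_powr_mult:
  fixes \<sigma> \<alpha> x y :: real
  assumes "\<sigma> > 0"
  shows "(\<integral>\<^sup>+ z. ennreal (normal_density x \<sigma> z powr \<alpha> * normal_density y \<sigma> z powr (1 - \<alpha>)) \<partial>lborel)
       = ennreal (exp (\<alpha> * (\<alpha> - 1) * (x - y)\<^sup>2 / (2 * \<sigma>\<^sup>2)))"
proof -
  have "(\<integral>\<^sup>+ z. ennreal (normal_density (\<alpha> * x + (1 - \<alpha>) * y) \<sigma> z) \<partial>lborel) = 1"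
    using assms by (subst nn_integral_eq_integral) auto
  then show ?thesis
    unfolding normal_density_powr_mult[OF assms] by (simp add: ennreal_mult nn_integral_cmult)
qed

lemma (in finite_measure) integrable_normal_density_mean:
  assumes "h \<in> borel_measurable M"
  shows "integrable M (\<lambda>p. normal_density (h p) \<sigma> z)"
proof (rule integrable_const_bound[where B="1 / sqrt (2 * pi * \<sigma>\<^sup>2)"])
  have "normal_density m \<sigma> x \<le> 1 / sqrt (2 * pi * \<sigma>\<^sup>2)" for m x
    unfolding normal_density_def by (intro mult_left_le) auto
  then show "AE p in M. norm (normal_density (h p) \<sigma> z) \<le> 1 / sqrt (2 * pi * \<sigma>\<^sup>2)"
    by simp
qed (use assms in \<open>unfold normal_density_def, measurable\<close>)

lemma bind_normal_measure:
  fixes h :: "'a \<Rightarrow> real"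
  assumes "\<sigma> > 0" and M: "prob_space M" and h[measurable]: "h \<in> borel_measurable M"
  shows "M \<bind> (\<lambda>p. normal_measure (h p) \<sigma>)
    = density lborel (\<lambda>z. ennreal (\<integral>p. normal_density (h p) \<sigma> z \<partial>M))"
proof (rule measure_eqI)
  interpret prob_space M by fact
  interpret pair_sigma_finite M lborel ..
  have K: "(\<lambda>p. normal_measure (h p) \<sigma>) \<in> M \<rightarrow>\<^sub>M subprob_algebra borel"
    using measurable_compose[OF h measurable_normal_measure[OF assms(1)]] .
  have meas: "(\<lambda>p. normal_density (h p) \<sigma> z) \<in> borel_measurable M" for z
    unfolding normal_density_def by measurable
  have integrable: "integrable M (\<lambda>p. normal_density (h p) \<sigma> z)" for z
    by (rule integrable_normal_density_mean) measurable
  show "sets (M \<bind> (\<lambda>p. normal_measure (h p) \<sigma>)) = sets (density lborel (\<lambda>z. ennreal (\<integral>p. normal_density (h p) \<sigma> z \<partial>M)))"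
    using K not_empty by (subst sets_bind_measurable) auto
  fix A assume "A \<in> sets (M \<bind> (\<lambda>p. normal_measure (h p) \<sigma>))"
  then have A: "A \<in> sets borel"
    using K not_empty by (subst (asm) sets_bind_measurable) auto
  have "emeasure (M \<bind> (\<lambda>p. normal_measure (h p) \<sigma>)) A
      = (\<integral>\<^sup>+ p. \<integral>\<^sup>+ z. ennreal (normal_density (h p) \<sigma> z) * indicator A z \<partial>lborel \<partial>M)"
    using A K by (simp add: emeasure_bind[OF not_empty] normal_measure_def emeasure_density)
  also have "\<dots> = (\<integral>\<^sup>+ z. \<integral>\<^sup>+ p. ennreal (normal_density (h p) \<sigma> z) * indicator A z \<partial>M \<partial>lborel)"
    using A by (intro Fubini'[symmetric]) (auto simp: normal_density_def)
  also have "\<dots> = (\<integral>\<^sup>+ z. (\<integral>\<^sup>+ p. ennreal (normal_density (h p) \<sigma> z) \<partial>M) * indicator A z \<partial>lborel)"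
    using meas by (intro nn_integral_cong nn_integral_multc) auto
  also have "\<dots> = emeasure (density lborel (\<lambda>z. \<integral>\<^sup>+ p. ennreal (normal_density (h p) \<sigma> z) \<partial>M)) A"
    using A by (subst emeasure_density) (auto simp: normal_density_def)
  also have "(\<lambda>z. \<integral>\<^sup>+ p. ennreal (normal_density (h p) \<sigma> z) \<partial>M)
      = (\<lambda>z. ennreal (\<integral>p. normal_density (h p) \<sigma> z \<partial>M))"
    using integrable by (simp add: nn_integral_eq_integral)
  finally show "emeasure (M \<bind> (\<lambda>p. normal_measure (h p) \<sigma>)) A
    = emeasure (density lborel (\<lambda>z. ennreal (\<integral>p. normal_density (h p) \<sigma> z \<partial>M))) A" .
qed

lemma borel_measurable_fst_snd [measurable]:
  "fst \<in> borel_measurable (borel :: (real \<times> real) measure)"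
  "snd \<in> borel_measurable (borel :: (real \<times> real) measure)"
  by (auto intro!: borel_measurable_continuous_onI continuous_intros)

lemma nn_integral_normal_mixture_powr_le:
  fixes \<pi> :: "(real \<times> real) measure"
  assumes \<sigma>: "\<sigma> > 0" and \<alpha>: "\<alpha> > 1" and \<pi>: "prob_space \<pi>" "sets \<pi> = sets borel"
  shows "(\<integral>\<^sup>+ z. ennreal ((\<integral>p. normal_density (fst p) \<sigma> z \<partial>\<pi>) powr \<alpha>
      * (\<integral>p. normal_density (snd p) \<sigma> z \<partial>\<pi>) powr (1 - \<alpha>)) \<partial>lborel)
    \<le> (\<integral>\<^sup>+ p. ennreal (exp (\<alpha> * (\<alpha> - 1) * (fst p - snd p)\<^sup>2 / (2 * \<sigma>\<^sup>2))) \<partial>\<pi>)"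
proof -
  interpret prob_space \<pi> by fact
  interpret pair_sigma_finite \<pi> lborel ..
  note \<pi>(2)[measurable_cong]
  have integrable: "integrable \<pi> (\<lambda>p. normal_density (fst p) \<sigma> z)"
      "integrable \<pi> (\<lambda>p. normal_density (snd p) \<sigma> z)" for z
    by (auto intro!: integrable_normal_density_mean)
  have "(\<integral>\<^sup>+ z. ennreal ((\<integral>p. normal_density (fst p) \<sigma> z \<partial>\<pi>) powr \<alpha>
      * (\<integral>p. normal_density (snd p) \<sigma> z \<partial>\<pi>) powr (1 - \<alpha>)) \<partial>lborel)
    \<le> (\<integral>\<^sup>+ z. \<integral>\<^sup>+ p. ennreal (normal_density (fst p) \<sigma> z powr \<alpha> * normal_density (snd p) \<sigma> z powr (1 - \<alpha>)) \<partial>\<pi> \<partial>lborel)"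
    by (intro nn_integral_mono jensen_powr_perspective \<alpha> integrable normal_density_pos \<sigma>)
  also have "\<dots> = (\<integral>\<^sup>+ p. \<integral>\<^sup>+ z. ennreal (normal_density (fst p) \<sigma> z powr \<alpha> * normal_density (snd p) \<sigma> z powr (1 - \<alpha>)) \<partial>lborel \<partial>\<pi>)"
    by (rule Fubini') (unfold normal_density_def, measurable)
  also have "\<dots> = (\<integral>\<^sup>+ p. ennreal (exp (\<alpha> * (\<alpha> - 1) * (fst p - snd p)\<^sup>2 / (2 * \<sigma>\<^sup>2))) \<partial>\<pi>)"
    by (simp add: nn_integral_normal_density_powr_mult[OF \<sigma>])
  finally show ?thesis .
qed

lemma renyi_div_normal_mixture_le:
  fixes \<pi> :: "(real \<times> real) measure"
  assumes \<sigma>: "\<sigma> > 0" and \<alpha>: "\<alpha> > 1" and \<pi>: "prob_space \<pi>" "sets \<pi> = sets borel"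
    and c: "c \<ge> 0" and close: "AE p in \<pi>. \<bar>fst p - snd p\<bar> \<le> c"
  shows "renyi_div \<alpha> (\<pi> \<bind> (\<lambda>p. normal_measure (fst p) \<sigma>)) (\<pi> \<bind> (\<lambda>p. normal_measure (snd p) \<sigma>))
    \<le> ennreal (\<alpha> * c\<^sup>2 / (2 * \<sigma>\<^sup>2))"
proof -
  interpret prob_space \<pi> by fact
  note \<pi>(2)[measurable_cong]
  define a where "a = (\<lambda>z. \<integral>p. normal_density (fst p) \<sigma> z \<partial>\<pi>)"
  define b where "b = (\<lambda>z. \<integral>p. normal_density (snd p) \<sigma> z \<partial>\<pi>)"
  have a_pos: "a z > 0" and b_pos: "b z > 0" for z
    unfolding a_def b_def
    by (auto intro!: integral_pos normal_density_pos \<sigma> integrable_normal_density_mean)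
  have [measurable]: "a \<in> borel_measurable borel" "b \<in> borel_measurable borel"
    unfolding a_def b_def normal_density_def by measurable
  have mixtures: "\<pi> \<bind> (\<lambda>p. normal_measure (fst p) \<sigma>) = density lborel a"
      "\<pi> \<bind> (\<lambda>p. normal_measure (snd p) \<sigma>) = density lborel b"
    unfolding a_def b_def by (auto intro!: bind_normal_measure \<sigma> \<pi>)
  have "(\<integral>\<^sup>+ z. ennreal (a z powr \<alpha> * b z powr (1 - \<alpha>)) \<partial>lborel)
      \<le> (\<integral>\<^sup>+ p. ennreal (exp (\<alpha> * (\<alpha> - 1) * (fst p - snd p)\<^sup>2 / (2 * \<sigma>\<^sup>2))) \<partial>\<pi>)"
    unfolding a_def b_def by (rule nn_integral_normal_mixture_powr_le[OF \<sigma> \<alpha> \<pi>])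
  also have "\<dots> \<le> (\<integral>\<^sup>+ p. ennreal (exp (\<alpha> * (\<alpha> - 1) * c\<^sup>2 / (2 * \<sigma>\<^sup>2))) \<partial>\<pi>)"
  proof (intro nn_integral_mono_AE, use close in \<open>elim eventually_mono\<close>)
    fix p :: "real \<times> real" assume "\<bar>fst p - snd p\<bar> \<le> c"
    then have "(fst p - snd p)\<^sup>2 \<le> c\<^sup>2"
      using power_mono[of _ c 2] by fastforce
    then show "ennreal (exp (\<alpha> * (\<alpha> - 1) * (fst p - snd p)\<^sup>2 / (2 * \<sigma>\<^sup>2)))
        \<le> ennreal (exp (\<alpha> * (\<alpha> - 1) * c\<^sup>2 / (2 * \<sigma>\<^sup>2)))"
      using \<alpha> \<sigma> by (intro ennreal_leI exp_mono divide_right_mono mult_left_mono) auto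
  qed
  also have "\<dots> = ennreal (exp ((\<alpha> - 1) * (\<alpha> * c\<^sup>2 / (2 * \<sigma>\<^sup>2))))"
    by (simp add: emeasure_space_1 mult_ac)
  finally show ?thesis
    unfolding mixtures using a_pos b_pos \<alpha> c \<sigma>
    by (intro renyi_div_density_le) (auto intro: less_imp_le sigma_finite_lborel)
qed

section \<open>Couplings and the \<open>\<infinity>\<close>-Wasserstein distance\<close>

lemma AE_abs_diff_le_of_msupport:
  fixes \<pi> :: "(real \<times> real) measure"
  assumes sets: "sets \<pi> = sets borel" and c: "0 \<le> c"
    and sup: "(SUP z\<in>msupport \<pi>. ennreal \<bar>fst z - snd z\<bar>) \<le> ennreal c"
  shows "AE p in \<pi>. \<bar>fst p - snd p\<bar> \<le> c"
proof -
  define F where "F = {B. open B \<and> emeasure \<pi> B = 0}"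
  have far_covered: "{p. c < \<bar>fst p - snd p\<bar>} \<subseteq> \<Union>F"
  proof
    fix z assume z: "z \<in> {p. c < \<bar>fst p - snd p\<bar>}"
    have "z \<notin> msupport \<pi>"
    proof
      assume "z \<in> msupport \<pi>"
      then have "ennreal \<bar>fst z - snd z\<bar> \<le> ennreal c"
        using sup by (meson SUP_upper order_trans)
      then show False
        using z c by auto
    qed
    then obtain e where "e > 0" "emeasure \<pi> (ball z e) = 0"
      by (auto simp: msupport_def zero_less_iff_neq_zero)
    then show "z \<in> \<Union>F"
      by (auto simp: F_def intro!: UnionI[of "ball z e"])
  qed
  obtain F' where F': "F' \<subseteq> F" "countable F'" "\<Union>F' = \<Union>F"
    using Lindelof[of F] by (auto simp: F_def)
  have "(\<Union>B\<in>F'. B) \<in> null_sets \<pi>"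
    using F' sets by (intro null_sets_UN') (auto simp: F_def null_sets_def)
  moreover have "{p \<in> space \<pi>. \<not> \<bar>fst p - snd p\<bar> \<le> c} \<subseteq> (\<Union>B\<in>F'. B)"
    using far_covered F' by auto
  ultimately show ?thesis
    by (intro AE_I') auto
qed

lemma le_mult_power2_Inf:
  fixes S :: "ennreal set" and r K :: ennreal
  assumes K: "K \<noteq> \<infinity>" "K > 0" and le: "\<And>c. c \<in> S \<Longrightarrow> r \<le> K * c\<^sup>2"
  shows "r \<le> K * (Inf S)\<^sup>2"
proof (cases "S = {}")
  case True
  then show ?thesis
    using K by (simp add: top_power_ennreal ennreal_mult_top)
next
  case False
  define f where "f = (\<lambda>x::ennreal. K * x\<^sup>2)"
  have "mono f"
    unfolding f_def by (intro monoI mult_left_mono power_mono) auto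
  moreover have "continuous (at_right l) f" for l
    unfolding f_def continuous_within power2_eq_square
    by (intro tendsto_mult_ennreal tendsto_ident_at tendsto_const) (use K in auto)
  ultimately have "f (Inf S) = (INF s\<in>S. f s)"
    using False by (intro continuous_at_Inf_mono) auto
  moreover have "r \<le> (INF s\<in>S. f s)"
    using le by (intro INF_greatest) (simp add: f_def)
  ultimately show ?thesis
    by (simp add: f_def)
qed

text \<open>Any coupling of \<open>\<mu>\<close> and \<open>\<nu>\<close> turns the two Gaussian smoothings into mixtures over one law
  whose components have nearby means.\<close>
lemma renyi_div_bind_normal_le_W_inf:
  assumes \<sigma>: "\<sigma> > 0" and \<alpha>: "\<alpha> > 1"
  shows "renyi_div \<alpha> (\<mu> \<bind> (\<lambda>x. normal_measure x \<sigma>)) (\<nu> \<bind> (\<lambda>x. normal_measure x \<sigma>))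
    \<le> ennreal (\<alpha> / (2 * \<sigma>\<^sup>2)) * (W_inf \<mu> \<nu>)\<^sup>2"
  unfolding W_inf_def
proof (rule le_mult_power2_Inf)
  show "ennreal (\<alpha> / (2 * \<sigma>\<^sup>2)) \<noteq> \<infinity>" "ennreal (\<alpha> / (2 * \<sigma>\<^sup>2)) > 0"
    using \<sigma> \<alpha> by auto
  fix c assume "c \<in> (\<lambda>\<pi>. SUP z\<in>msupport \<pi>. ennreal \<bar>fst z - snd z\<bar>) ` couplings \<mu> \<nu>"
  then obtain \<pi> where \<pi>: "\<pi> \<in> couplings \<mu> \<nu>" and c: "c = (SUP z\<in>msupport \<pi>. ennreal \<bar>fst z - snd z\<bar>)"
    by auto
  have P: "prob_space \<pi>" and sets: "sets \<pi> = sets borel"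
    and \<mu>: "distr \<pi> borel fst = \<mu>" and \<nu>: "distr \<pi> borel snd = \<nu>"
    using \<pi> by (auto simp: couplings_def)
  show "renyi_div \<alpha> (\<mu> \<bind> (\<lambda>x. normal_measure x \<sigma>)) (\<nu> \<bind> (\<lambda>x. normal_measure x \<sigma>))
    \<le> ennreal (\<alpha> / (2 * \<sigma>\<^sup>2)) * c\<^sup>2"
  proof (cases c)
    case (real c')
    interpret prob_space \<pi> by fact
    note sets[measurable_cong]
    have K: "(\<lambda>x. normal_measure x \<sigma>) \<in> borel \<rightarrow>\<^sub>M subprob_algebra borel"
      by (rule measurable_normal_measure[OF \<sigma>])
    have "\<mu> \<bind> (\<lambda>x. normal_measure x \<sigma>) = \<pi> \<bind> (\<lambda>p. normal_measure (fst p) \<sigma>)"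
        "\<nu> \<bind> (\<lambda>x. normal_measure x \<sigma>) = \<pi> \<bind> (\<lambda>p. normal_measure (snd p) \<sigma>)"
      unfolding \<mu>[symmetric] \<nu>[symmetric] by (auto intro!: bind_distr K not_empty)
    moreover have "AE p in \<pi>. \<bar>fst p - snd p\<bar> \<le> c'"
      using c real by (intro AE_abs_diff_le_of_msupport sets) auto
    ultimately have "renyi_div \<alpha> (\<mu> \<bind> (\<lambda>x. normal_measure x \<sigma>)) (\<nu> \<bind> (\<lambda>x. normal_measure x \<sigma>))
        \<le> ennreal (\<alpha> * c'\<^sup>2 / (2 * \<sigma>\<^sup>2))"
      using renyi_div_normal_mixture_le[OF \<sigma> \<alpha> P sets] real by simp
    also have "\<dots> = ennreal (\<alpha> / (2 * \<sigma>\<^sup>2)) * c\<^sup>2"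
      using real \<sigma> \<alpha> by (simp add: ennreal_power ennreal_mult[symmetric])
    finally show ?thesis .
  qed (use \<sigma> \<alpha> in \<open>simp add: top_power_ennreal ennreal_mult_top\<close>)
qed

text \<open>A minorant of \<^const>\<open>W_inf\<close> that still separates laws but, being a countable supremum of
  CDF comparisons, is measurable along slices. \<^const>\<open>W_inf\<close> itself need not be, so a vanishing
  integral of its square would not force it to vanish almost everywhere.\<close>
definition cdf_gap :: "real measure \<Rightarrow> real measure \<Rightarrow> ennreal" where
  "cdf_gap \<mu> \<nu> = (SUP (t, q) \<in> \<rat> \<times> (\<rat> \<inter> {0<..}).
     if measure \<nu> {..t + q} < measure \<mu> {..t} \<or> measure \<mu> {..t + q} < measure \<nu> {..t}
     then ennreal q else 0)"

lemma exists_Rats_shift_lt: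
  fixes F G :: "real \<Rightarrow> real"
  assumes "mono F" and "mono G" and "continuous (at_right t) G" and "G t < F t"
  shows "\<exists>t'\<in>\<rat>. \<exists>q\<in>\<rat>. 0 < q \<and> G (t' + q) < F t'"
proof -
  have "eventually (\<lambda>x. G x < F t) (at_right t)"
    using assms(3,4) by (intro order_tendstoD) (simp_all add: continuous_within)
  then obtain b where "b > t" and b: "\<And>y. t < y \<Longrightarrow> y < b \<Longrightarrow> G y < F t"
    by (auto simp: eventually_at_right_field)
  define d where "d = (b - t) / 4"
  have "d > 0" "t + 2 * d < b"
    using \<open>b > t\<close> by (simp_all add: d_def field_simps)
  obtain t' where t': "t' \<in> \<rat>" "t < t'" "t' < t + d"
    using Rats_dense_in_real[of t "t + d"] \<open>d > 0\<close> by auto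
  obtain q where q: "q \<in> \<rat>" "0 < q" "q < d"
    using Rats_dense_in_real[of 0 d] \<open>d > 0\<close> by auto
  have "G (t' + q) < F t"
    using t' q \<open>t + 2 * d < b\<close> by (intro b) linarith+
  also have "\<dots> \<le> F t'"
    using t' by (intro monoD[OF assms(1)]) simp
  finally have "G (t' + q) < F t'" .
  with t' q show ?thesis
    by blast
qed

lemma eq_if_cdf_gap_eq_0:
  assumes \<mu>: "real_distribution \<mu>" and \<nu>: "real_distribution \<nu>" and gap: "cdf_gap \<mu> \<nu> = 0"
  shows "\<mu> = \<nu>"
proof (rule ccontr)
  assume "\<mu> \<noteq> \<nu>"
  then obtain t where t: "cdf \<mu> t \<noteq> cdf \<nu> t"
    using cdf_unique[OF \<mu> \<nu>] by auto
  interpret \<mu>: real_distribution \<mu> by fact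
  interpret \<nu>: real_distribution \<nu> by fact
  have mono: "mono (cdf \<mu>)" "mono (cdf \<nu>)"
    by (auto intro!: monoI \<mu>.cdf_nondecreasing \<nu>.cdf_nondecreasing)
  have right_cont: "continuous (at_right t) (cdf \<mu>)" "continuous (at_right t) (cdf \<nu>)"
    by (rule \<mu>.cdf_is_right_cont \<nu>.cdf_is_right_cont)+
  obtain t' q where t'q: "t' \<in> \<rat>" "q \<in> \<rat>" "0 < q"
    and apart: "cdf \<nu> (t' + q) < cdf \<mu> t' \<or> cdf \<mu> (t' + q) < cdf \<nu> t'"
  proof (cases "cdf \<nu> t < cdf \<mu> t")
    case True
    then show ?thesis
      using exists_Rats_shift_lt[OF mono right_cont(2)] that by blast
  next
    case False
    then have "cdf \<mu> t < cdf \<nu> t"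
      using t by linarith
    then show ?thesis
      using exists_Rats_shift_lt[OF mono(2,1) right_cont(1)] that by blast
  qed
  have "ennreal q \<le> cdf_gap \<mu> \<nu>"
    unfolding cdf_gap_def
    by (rule SUP_upper2[where i="(t', q)"]) (use t'q apart in \<open>auto simp: cdf_def\<close>)
  then show False
    using gap \<open>0 < q\<close> by simp
qed

lemma (in prob_space) measure_distr_atMost_le_shift:
  fixes X Y :: "'a \<Rightarrow> real"
  assumes [measurable]: "X \<in> borel_measurable M" "Y \<in> borel_measurable M"
    and close: "AE x in M. \<bar>X x - Y x\<bar> \<le> c" and "c < q"
  shows "measure (distr M borel X) {..t} \<le> measure (distr M borel Y) {..t + q}"
proof -
  have "AE x in M. x \<in> X -` {..t} \<inter> space M \<longrightarrow> x \<in> Y -` {..t + q} \<inter> space M"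
    using close by eventually_elim (use \<open>c < q\<close> in \<open>auto simp: abs_le_iff\<close>)
  moreover have "Y -` {..t + q} \<inter> space M \<in> events"
    by measurable
  ultimately have "measure M (X -` {..t} \<inter> space M) \<le> measure M (Y -` {..t + q} \<inter> space M)"
    by (rule finite_measure_mono_AE)
  then show ?thesis
    by (simp add: measure_distr)
qed

lemma couplings_atMost_le_shift:
  assumes "\<pi> \<in> couplings \<mu> \<nu>" and close: "AE p in \<pi>. \<bar>fst p - snd p\<bar> \<le> c" and "c < q"
  shows "measure \<mu> {..t} \<le> measure \<nu> {..t + q}" and "measure \<nu> {..t} \<le> measure \<mu> {..t + q}"
proof -
  have \<pi>: "prob_space \<pi>" "sets \<pi> = sets borel"
    and \<mu>: "distr \<pi> borel fst = \<mu>" and \<nu>: "distr \<pi> borel snd = \<nu>"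
    using assms(1) by (auto simp: couplings_def)
  interpret prob_space \<pi> by fact
  note \<pi>(2)[measurable_cong]
  have fst_snd: "fst \<in> borel_measurable \<pi>" "snd \<in> borel_measurable \<pi>"
    by measurable
  have close': "AE p in \<pi>. \<bar>snd p - fst p\<bar> \<le> c"
    using close by (simp add: abs_minus_commute)
  show "measure \<mu> {..t} \<le> measure \<nu> {..t + q}"
    unfolding \<mu>[symmetric] \<nu>[symmetric] by (rule measure_distr_atMost_le_shift[OF fst_snd close \<open>c < q\<close>])
  show "measure \<nu> {..t} \<le> measure \<mu> {..t + q}"
    unfolding \<mu>[symmetric] \<nu>[symmetric] by (rule measure_distr_atMost_le_shift[OF fst_snd(2,1) close' \<open>c < q\<close>])
qed

lemma cdf_gap_le_W_inf: "cdf_gap \<mu> \<nu> \<le> W_inf \<mu> \<nu>"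
proof -
  have key: "ennreal q \<le> (SUP z\<in>msupport \<pi>. ennreal \<bar>fst z - snd z\<bar>)"
    if \<pi>: "\<pi> \<in> couplings \<mu> \<nu>"
      and apart: "measure \<nu> {..t + q} < measure \<mu> {..t} \<or> measure \<mu> {..t + q} < measure \<nu> {..t}"
    for \<pi> t q
  proof (cases "SUP z\<in>msupport \<pi>. ennreal \<bar>fst z - snd z\<bar>")
    case (real c)
    then have close: "AE p in \<pi>. \<bar>fst p - snd p\<bar> \<le> c"
      using \<pi> by (intro AE_abs_diff_le_of_msupport) (auto simp: couplings_def)
    have "\<not> c < q"
    proof
      assume "c < q"
      then show False
        using couplings_atMost_le_shift[OF \<pi> close, of q t] apart by linarith
    qed
    then show ?thesis
      using real by (simp add: ennreal_leI not_less)
  qed (simp only: top_greatest)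
  show ?thesis
    unfolding cdf_gap_def W_inf_def
  proof (rule SUP_least, rule INF_greatest)
    fix x \<pi> assume "\<pi> \<in> couplings \<mu> \<nu>"
    then show "(case x of (t, q) \<Rightarrow>
        if measure \<nu> {..t + q} < measure \<mu> {..t} \<or> measure \<mu> {..t + q} < measure \<nu> {..t}
        then ennreal q else 0) \<le> (SUP z\<in>msupport \<pi>. ennreal \<bar>fst z - snd z\<bar>)"
      using key by (simp split: prod.split)
  qed
qed

lemma real_distribution_slice:
  assumes "prob_space P" and "sets P = sets (borel :: 'a::euclidean_space measure)"
  shows "real_distribution (slice P u)"
proof -
  have "(\<lambda>a. a \<bullet> u) \<in> P \<rightarrow>\<^sub>M borel"
    by (subst measurable_cong_sets[OF assms(2) refl]) simp
  then have "prob_space (slice P u)"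
    unfolding slice_def by (rule prob_space.prob_space_distr[OF assms(1)])
  then show ?thesis
    by (simp add: real_distribution_def real_distribution_axioms_def slice_def)
qed

lemma borel_measurable_measure_slice_atMost:
  fixes P :: "'a::euclidean_space measure"
  assumes P: "prob_space P" and sets_P: "sets P = sets borel"
  shows "(\<lambda>u. measure (slice P u) {..t}) \<in> borel_measurable borel"
proof -
  interpret prob_space P by fact
  note sets_P[measurable_cong]
  have space_P: "space P = UNIV"
    using sets_eq_imp_space_eq[OF sets_P] by simp
  define H where "H = {p :: 'a \<times> 'a. snd p \<bullet> fst p \<le> t}"
  have "{p \<in> space (borel \<Otimes>\<^sub>M P). snd p \<bullet> fst p \<le> t} \<in> sets (borel \<Otimes>\<^sub>M P)"
    by measurable
  then have H: "H \<in> sets (borel \<Otimes>\<^sub>M P)"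
    by (simp add: H_def space_pair_measure space_P)
  have "measure (slice P u) {..t} = enn2real (emeasure P (Pair u -` H))" for u
  proof -
    have "measure (slice P u) {..t} = measure P ((\<lambda>a. a \<bullet> u) -` {..t} \<inter> space P)"
      unfolding slice_def by (rule measure_distr) auto
    also have "(\<lambda>a. a \<bullet> u) -` {..t} \<inter> space P = Pair u -` H"
      by (auto simp: H_def space_P)
    finally show ?thesis
      by (simp add: measure_def)
  qed
  then show ?thesis
    using H by (simp add: borel_measurable_enn2real measurable_emeasure_Pair)
qed

lemma borel_measurable_cdf_gap_slice:
  fixes P P' :: "'a::euclidean_space measure"
  assumes "prob_space P" "sets P = sets borel" "prob_space P'" "sets P' = sets borel"
  shows "(\<lambda>u. cdf_gap (slice P u) (slice P' u)) \<in> borel_measurable borel"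
proof -
  have [measurable]: "(\<lambda>u. measure (slice P u) {..t}) \<in> borel_measurable borel"
      "(\<lambda>u. measure (slice P' u) {..t}) \<in> borel_measurable borel" for t
    using assms by (auto intro: borel_measurable_measure_slice_atMost)
  have "countable (\<rat> \<times> (\<rat> \<inter> {0<..}) :: (real \<times> real) set)"
    by (intro countable_SIGMA countable_rat countable_Int1)
  then show ?thesis
    unfolding cdf_gap_def by (intro borel_measurable_SUP) measurable
qed

section \<open>Isotropic Gaussian noise\<close>

lemma finite_product_prob_space_normal_measure:
  assumes "\<sigma> > 0" and "finite I"
  shows "finite_product_prob_space (\<lambda>_. normal_measure 0 \<sigma>) I"
  using assms prob_space_normal_measure[OF assms(1)]
  by (intro finite_product_prob_space.intro finite_product_sigma_finite.intro product_prob_spaceI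
      finite_product_sigma_finite_axioms.intro product_sigma_finite.intro)
     (auto intro: prob_space_imp_sigma_finite)

lemma sets_PiM_normal_measure [measurable_cong]:
  "sets (\<Pi>\<^sub>M i\<in>I. normal_measure \<mu> \<sigma>) = sets (\<Pi>\<^sub>M i\<in>I. borel)"
  by (intro sets_PiM_cong) auto

lemma sets_gaussian_noise [simp, measurable_cong]: "sets (gaussian_noise s2) = sets borel"
  by (simp add: gaussian_noise_def)

lemma (in finite_product_prob_space) indep_vars_components:
  assumes "J \<subseteq> I" and "J \<noteq> {}"
  shows "prob_space.indep_vars (\<Pi>\<^sub>M i\<in>I. M i) M (\<lambda>i f. f i) J"
proof (subst indep_vars_iff_distr_eq_PiM'[OF assms(2)])
  show "(\<lambda>f. f i) \<in> (\<Pi>\<^sub>M i\<in>I. M i) \<rightarrow>\<^sub>M M i" if "i \<in> J" for i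
    using that assms(1) by (auto intro: measurable_component_singleton)
  have "distr (\<Pi>\<^sub>M i\<in>I. M i) (\<Pi>\<^sub>M i\<in>J. M i) (\<lambda>f. \<lambda>i\<in>J. f i) = (\<Pi>\<^sub>M i\<in>J. M i)"
    using distr_PiM_restrict_finite[OF finite_subset[OF assms(1) finite_index] assms(1)]
    by (simp add: restrict_def)
  also have "\<dots> = (\<Pi>\<^sub>M i\<in>J. distr (\<Pi>\<^sub>M i\<in>I. M i) (M i) (\<lambda>f. f i))"
    using assms(1) by (intro PiM_cong refl) (auto simp: PiM_component)
  finally show "distr (\<Pi>\<^sub>M i\<in>I. M i) (\<Pi>\<^sub>M i\<in>J. M i) (\<lambda>f. \<lambda>i\<in>J. f i)
    = (\<Pi>\<^sub>M i\<in>J. distr (\<Pi>\<^sub>M i\<in>I. M i) (M i) (\<lambda>f. f i))" .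
qed

lemma indicator_PiE_eq_prod:
  fixes A :: "'i \<Rightarrow> 'b set"
  assumes "finite I" and "x \<in> extensional I"
  shows "(indicator (Pi\<^sub>E I A) x :: ennreal) = (\<Prod>i\<in>I. indicator (A i) (x i))"
proof (cases "\<forall>i\<in>I. x i \<in> A i")
  case False
  then obtain i where "i \<in> I" "x i \<notin> A i"
    by auto
  then have "(\<Prod>i\<in>I. (indicator (A i) (x i) :: ennreal)) = 0"
    using assms by (intro prod_zero) (auto intro!: bexI[of _ i])
  moreover have "x \<notin> Pi\<^sub>E I A"
    using \<open>i \<in> I\<close> \<open>x i \<notin> A i\<close> by (auto simp: PiE_def)
  ultimately show ?thesis
    by simp
qed (use assms in \<open>auto simp: PiE_def indicator_def\<close>)

lemma PiM_density_lborel: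
  fixes h :: "real \<Rightarrow> real"
  assumes I: "finite I" and [measurable]: "h \<in> borel_measurable borel"
    and h: "sigma_finite_measure (density lborel h)"
  shows "density (\<Pi>\<^sub>M i\<in>I. lborel) (\<lambda>f. \<Prod>i\<in>I. ennreal (h (f i))) = (\<Pi>\<^sub>M i\<in>I. density lborel h)"
proof (rule product_sigma_finite.PiM_eqI[OF _ I])
  show "product_sigma_finite (\<lambda>_. density lborel h)"
    using h by (simp add: product_sigma_finite_def)
  show "sets (density (\<Pi>\<^sub>M i\<in>I. lborel) (\<lambda>f. \<Prod>i\<in>I. ennreal (h (f i)))) = sets (\<Pi>\<^sub>M i\<in>I. density lborel h)"
    by (simp cong: sets_PiM_cong)
  fix A assume A: "\<And>i. i \<in> I \<Longrightarrow> A i \<in> sets (density lborel h)"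
  have "emeasure (density (\<Pi>\<^sub>M i\<in>I. lborel) (\<lambda>f. \<Prod>i\<in>I. ennreal (h (f i)))) (Pi\<^sub>E I A)
      = (\<integral>\<^sup>+ f. (\<Prod>i\<in>I. ennreal (h (f i))) * indicator (Pi\<^sub>E I A) f \<partial>(\<Pi>\<^sub>M i\<in>I. lborel))"
    using A I by (intro emeasure_density) (auto intro!: sets_PiM_I_finite)
  also have "\<dots> = (\<integral>\<^sup>+ f. (\<Prod>i\<in>I. ennreal (h (f i)) * indicator (A i) (f i)) \<partial>(\<Pi>\<^sub>M i\<in>I. lborel))"
  proof (rule nn_integral_cong)
    fix f :: "_ \<Rightarrow> real" assume "f \<in> space (\<Pi>\<^sub>M i\<in>I. lborel)"
    then have "f \<in> extensional I"
      by (simp add: space_PiM PiE_iff)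
    then show "(\<Prod>i\<in>I. ennreal (h (f i))) * indicator (Pi\<^sub>E I A) f
        = (\<Prod>i\<in>I. ennreal (h (f i)) * indicator (A i) (f i))"
      by (simp add: indicator_PiE_eq_prod[OF I] prod.distrib)
  qed
  also have "\<dots> = (\<Prod>i\<in>I. \<integral>\<^sup>+ x. ennreal (h x) * indicator (A i) x \<partial>lborel)"
    using A I
    by (intro product_sigma_finite.product_nn_integral_prod)
       (auto simp: product_sigma_finite_def intro: sigma_finite_lborel)
  also have "\<dots> = (\<Prod>i\<in>I. emeasure (density lborel h) (A i))"
    using A by (intro prod.cong refl emeasure_density[symmetric]) auto
  finally show "emeasure (density (\<Pi>\<^sub>M i\<in>I. lborel) (\<lambda>f. \<Prod>i\<in>I. ennreal (h (f i)))) (Pi\<^sub>E I A)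
    = (\<Prod>i\<in>I. emeasure (density lborel h) (A i))" .
qed

lemma gaussian_density_eq_prod_normal_density:
  fixes \<sigma> :: real and f :: "'a::euclidean_space \<Rightarrow> real"
  assumes "\<sigma> > 0"
  shows "(2 * pi * \<sigma>\<^sup>2) powr (- real DIM('a) / 2) * exp (- (norm (\<Sum>b\<in>Basis. f b *\<^sub>R b :: 'a))\<^sup>2 / (2 * \<sigma>\<^sup>2))
       = (\<Prod>b\<in>(Basis::'a set). normal_density 0 \<sigma> (f b))"
proof -
  define k where "k = 1 / sqrt (2 * pi * \<sigma>\<^sup>2)"
  have pos: "2 * pi * \<sigma>\<^sup>2 > 0"
    using assms by simp
  have norm_sum: "(norm x)\<^sup>2 = (\<Sum>b\<in>(Basis::'a set). (f b)\<^sup>2)" if "x = (\<Sum>b\<in>Basis. f b *\<^sub>R b)" for x :: 'a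
  proof -
    have "(norm x)\<^sup>2 = (\<Sum>b\<in>(Basis::'a set). (x \<bullet> b) * (x \<bullet> b))"
      by (simp only: power2_norm_eq_inner euclidean_inner[of x x])
    then show ?thesis
      using that by (simp add: power2_eq_square)
  qed
  have "k = (2 * pi * \<sigma>\<^sup>2) powr (- (1 / 2))"
    by (simp only: k_def powr_minus_divide powr_half_sqrt[OF less_imp_le[OF pos]])
  then have "k ^ DIM('a) = (2 * pi * \<sigma>\<^sup>2) powr (real DIM('a) * (- (1 / 2)))"
    using pos by (simp only: powr_power of_nat_def)
  then have k_power: "k ^ DIM('a) = (2 * pi * \<sigma>\<^sup>2) powr (- real DIM('a) / 2)"
    by simp
  have "(\<Prod>b\<in>(Basis::'a set). normal_density 0 \<sigma> (f b))
      = (\<Prod>b\<in>(Basis::'a set). k * exp (- (f b)\<^sup>2 / (2 * \<sigma>\<^sup>2)))"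
    by (simp add: normal_density_def k_def)
  also have "\<dots> = k ^ DIM('a) * exp (\<Sum>b\<in>(Basis::'a set). - (f b)\<^sup>2 / (2 * \<sigma>\<^sup>2))"
    by (simp add: prod.distrib exp_sum)
  finally show ?thesis
    by (simp add: k_power norm_sum[OF refl] sum_divide_distrib sum_negf)
qed

lemma gaussian_noise_eq_distr_PiM:
  assumes "s2 > 0"
  shows "(gaussian_noise s2 :: 'a::euclidean_space measure)
    = distr (\<Pi>\<^sub>M b\<in>Basis. normal_measure 0 (sqrt s2)) borel (\<lambda>f. \<Sum>b\<in>Basis. f b *\<^sub>R b)"
proof -
  define \<sigma> where "\<sigma> = sqrt s2"
  have \<sigma>: "\<sigma> > 0" and s2: "s2 = \<sigma>\<^sup>2"
    using assms by (auto simp: \<sigma>_def)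
  define T where "T = (\<lambda>f. \<Sum>b\<in>Basis. f b *\<^sub>R b :: 'a)"
  define g where "g = (\<lambda>x::'a. ennreal ((2 * pi * s2) powr (- real DIM('a) / 2) * exp (- (norm x)\<^sup>2 / (2 * s2))))"
  have [measurable]: "T \<in> (\<Pi>\<^sub>M b\<in>Basis. lborel) \<rightarrow>\<^sub>M borel" "g \<in> borel_measurable borel"
    unfolding T_def g_def by measurable
  have "(gaussian_noise s2 :: 'a measure) = density (distr (\<Pi>\<^sub>M b\<in>Basis. lborel) borel T) g"
    using assms by (simp add: gaussian_noise_def g_def T_def flip: lborel_eq)
  also have "\<dots> = distr (density (\<Pi>\<^sub>M b\<in>Basis. lborel) (\<lambda>f. g (T f))) borel T"
    by (rule density_distr) auto
  also have "(\<lambda>f. g (T f)) = (\<lambda>f. \<Prod>b\<in>Basis. ennreal (normal_density 0 \<sigma> (f b)))"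
  proof
    fix f :: "'a \<Rightarrow> real"
    show "g (T f) = (\<Prod>b\<in>Basis. ennreal (normal_density 0 \<sigma> (f b)))"
      unfolding g_def T_def s2 using gaussian_density_eq_prod_normal_density[OF \<sigma>, of f]
      by (simp add: prod_ennreal)
  qed
  also have "density (\<Pi>\<^sub>M b\<in>Basis. lborel) \<dots> = (\<Pi>\<^sub>M b\<in>Basis. normal_measure 0 \<sigma>)"
    unfolding normal_measure_def using prob_space_normal_density[OF \<sigma>]
    by (intro PiM_density_lborel) (auto intro: prob_space_imp_sigma_finite)
  finally show ?thesis
    unfolding \<sigma>_def T_def .
qed

lemma prob_space_gaussian_noise:
  assumes "s2 \<ge> 0"
  shows "prob_space (gaussian_noise s2 :: 'a::euclidean_space measure)"
proof (cases "s2 = 0")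
  case False
  then have "s2 > 0"
    using assms by simp
  interpret finite_product_prob_space "\<lambda>_. normal_measure 0 (sqrt s2)" "Basis :: 'a set"
    using \<open>s2 > 0\<close> by (intro finite_product_prob_space_normal_measure) auto
  have "(\<lambda>f. \<Sum>b\<in>Basis. f b *\<^sub>R b :: 'a) \<in> (\<Pi>\<^sub>M b\<in>Basis. normal_measure 0 (sqrt s2)) \<rightarrow>\<^sub>M borel"
    by measurable
  then show ?thesis
    unfolding gaussian_noise_eq_distr_PiM[OF \<open>s2 > 0\<close>] by (rule prob_space_distr)
qed (simp add: gaussian_noise_def prob_space_return)

text \<open>A sum of independent centred normal coordinates, with variances \<open>\<sigma>\<^sup>2 * (b \<bullet> u)\<^sup>2\<close> adding up to
  \<open>(\<sigma> * norm u)\<^sup>2\<close>.\<close>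
lemma distr_PiM_normal_measure_inner:
  fixes u :: "'a::euclidean_space"
  assumes \<sigma>: "\<sigma> > 0" and "u \<noteq> 0"
  shows "distr (\<Pi>\<^sub>M b\<in>Basis. normal_measure 0 \<sigma>) borel (\<lambda>f. \<Sum>b\<in>Basis. (b \<bullet> u) * f b)
    = normal_measure 0 (\<sigma> * norm u)"
proof -
  define PB where "PB = (\<Pi>\<^sub>M b\<in>(Basis::'a set). normal_measure 0 \<sigma>)"
  interpret FP: finite_product_prob_space "\<lambda>_. normal_measure 0 \<sigma>" "Basis :: 'a set"
    by (intro finite_product_prob_space_normal_measure \<sigma>) simp
  interpret P: prob_space PB
    unfolding PB_def by (rule FP.prob_space_axioms)
  define I where "I = {b\<in>(Basis::'a set). b \<bullet> u \<noteq> 0}"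
  have I: "finite I" "I \<subseteq> Basis"
    by (auto simp: I_def)
  have "I \<noteq> {}"
  proof
    assume "I = {}"
    then have "\<forall>b\<in>Basis. u \<bullet> b = 0"
      by (auto simp: I_def inner_commute)
    then show False
      using \<open>u \<noteq> 0\<close> by (simp add: euclidean_all_zero_iff)
  qed
  define X where "X = (\<lambda>b (f::'a \<Rightarrow> real). 0 + (b \<bullet> u) * f b)"
  have coord: "distributed PB lborel (\<lambda>f. f b) (normal_density 0 \<sigma>)" if "b \<in> Basis" for b
  proof -
    have "distr PB lborel (\<lambda>f. f b) = distr PB (normal_measure 0 \<sigma>) (\<lambda>f. f b)"
      by (rule distr_cong) auto
    also have "\<dots> = normal_measure 0 \<sigma>"
      unfolding PB_def using that by (rule FP.PiM_component)
    finally show ?thesis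
      unfolding distributed_def normal_measure_def PB_def using that by auto
  qed
  have X: "distributed PB lborel (X b) (normal_density 0 (\<bar>b \<bullet> u\<bar> * \<sigma>))" if "b \<in> I" for b
    using P.normal_density_affine[OF coord[of b] \<sigma>, of "b \<bullet> u" 0] that by (auto simp: I_def X_def)
  have "P.indep_vars (\<lambda>_. borel) X I"
    unfolding X_def PB_def using FP.indep_vars_components[OF I(2) \<open>I \<noteq> {}\<close>]
    by (rule prob_space.indep_vars_compose2[OF FP.prob_space_axioms]) simp
  then have sum: "distributed PB lborel (\<lambda>f. \<Sum>b\<in>I. X b f)
      (normal_density (\<Sum>b\<in>I. 0) (sqrt (\<Sum>b\<in>I. (\<bar>b \<bullet> u\<bar> * \<sigma>)\<^sup>2)))"
    by (rule P.sum_indep_normal[OF I(1) \<open>I \<noteq> {}\<close>]) (use X \<sigma> in \<open>auto simp: I_def\<close>)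
  have "(\<Sum>b\<in>I. (\<bar>b \<bullet> u\<bar> * \<sigma>)\<^sup>2) = \<sigma>\<^sup>2 * (\<Sum>b\<in>(Basis::'a set). (b \<bullet> u)\<^sup>2)"
    by (simp add: power_mult_distrib sum_distrib_left mult.commute)
       (rule sum.mono_neutral_left, auto simp: I_def)
  also have "(\<Sum>b\<in>(Basis::'a set). (b \<bullet> u)\<^sup>2) = u \<bullet> u"
    by (simp add: euclidean_inner[of u u] power2_eq_square inner_commute)
  also have "u \<bullet> u = (norm u)\<^sup>2"
    by (simp add: power2_norm_eq_inner)
  finally have variance: "sqrt (\<Sum>b\<in>I. (\<bar>b \<bullet> u\<bar> * \<sigma>)\<^sup>2) = \<sigma> * norm u"
    using \<sigma> by (simp add: real_sqrt_mult)
  have "(\<Sum>b\<in>Basis. (b \<bullet> u) * f b) = (\<Sum>b\<in>I. X b f)" for f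
    by (simp add: X_def) (rule sum.mono_neutral_right, auto simp: I_def)
  then have "distr PB borel (\<lambda>f. \<Sum>b\<in>Basis. (b \<bullet> u) * f b) = distr PB lborel (\<lambda>f. \<Sum>b\<in>I. X b f)"
    by (intro distr_cong) auto
  also have "\<dots> = normal_measure 0 (\<sigma> * norm u)"
    using sum variance unfolding distributed_def normal_measure_def by simp
  finally show ?thesis
    unfolding PB_def .
qed

lemma slice_gaussian_noise:
  fixes u :: "'a::euclidean_space"
  assumes "s2 > 0" and "u \<noteq> 0"
  shows "slice (gaussian_noise s2 :: 'a measure) u = normal_measure 0 (sqrt s2 * norm u)"
proof -
  have "slice (gaussian_noise s2 :: 'a measure) u
      = distr (\<Pi>\<^sub>M b\<in>Basis. normal_measure 0 (sqrt s2)) borel (\<lambda>f. (\<Sum>b\<in>Basis. f b *\<^sub>R b :: 'a) \<bullet> u)"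
    unfolding slice_def gaussian_noise_eq_distr_PiM[OF assms(1)] by (subst distr_distr) (measurable, simp add: comp_def)
  also have "(\<lambda>f. (\<Sum>b\<in>Basis. f b *\<^sub>R b :: 'a) \<bullet> u) = (\<lambda>f. \<Sum>b\<in>Basis. (b \<bullet> u) * f b)"
    by (simp add: inner_sum_left mult.commute)
  finally show ?thesis
    using assms by (simp add: distr_PiM_normal_measure_inner)
qed

section \<open>The Gaussian mechanism\<close>

lemma measurable_gaussian_mech:
  assumes "s2 \<ge> 0" and "f \<in> M \<rightarrow>\<^sub>M borel"
  shows "gaussian_mech f s2 \<in> M \<rightarrow>\<^sub>M subprob_algebra borel"
proof -
  have noise: "gaussian_noise s2 \<in> space (subprob_algebra borel)"
    using prob_space_imp_subprob_space[OF prob_space_gaussian_noise[OF assms(1)]]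
    by (auto simp: space_subprob_algebra)
  show ?thesis
    unfolding gaussian_mech_def[abs_def]
    by (rule measurable_distr2[where M=borel]) (use assms(2) noise in \<open>auto intro!: measurable_const\<close>)
qed

lemma bind_gaussian_mech_zero:
  assumes "sets P = sets (borel :: 'a::euclidean_space measure)"
  shows "P \<bind> gaussian_mech id 0 = P"
proof -
  have "gaussian_mech id 0 = (return borel :: 'a \<Rightarrow> 'a measure)"
    by (simp add: fun_eq_iff gaussian_mech_def gaussian_noise_def distr_return)
  then show ?thesis
    using assms by (simp add: bind_return'')
qed

lemma slice_bind_gaussian_mech:
  fixes P :: "'a::euclidean_space measure"
  assumes P: "prob_space P" "sets P = sets borel" and s2: "s2 > 0" and u: "u \<noteq> 0"
  shows "slice (P \<bind> gaussian_mech id s2) u = slice P u \<bind> (\<lambda>x. normal_measure x (sqrt s2 * norm u))"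
proof -
  interpret prob_space P by fact
  have K: "gaussian_mech id s2 \<in> P \<rightarrow>\<^sub>M subprob_algebra borel"
    using measurable_gaussian_mech[of s2 id borel] s2 by (simp add: measurable_cong_sets[OF P(2) refl])
  have slice_mech: "slice (gaussian_mech id s2 y) u = normal_measure (y \<bullet> u) (sqrt s2 * norm u)" for y :: 'a
  proof -
    have "slice (gaussian_mech id s2 y) u = distr (gaussian_noise s2) borel (\<lambda>n. y \<bullet> u + n \<bullet> u)"
      unfolding slice_def gaussian_mech_def
      by (subst distr_distr) (auto simp: measurable_cong_sets[OF sets_gaussian_noise refl] comp_def inner_add_left)
    also have "\<dots> = distr (slice (gaussian_noise s2) u) borel (\<lambda>t. y \<bullet> u + t)"
      unfolding slice_def by (subst distr_distr) (auto simp: measurable_cong_sets[OF sets_gaussian_noise refl] comp_def)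
    finally show ?thesis
      using distr_translate_normal_measure[of 0 "sqrt s2 * norm u" "y \<bullet> u"]
      by (simp add: slice_gaussian_noise[OF s2 u])
  qed
  have "slice (P \<bind> gaussian_mech id s2) u = P \<bind> (\<lambda>y. slice (gaussian_mech id s2 y) u)"
    unfolding slice_def by (rule distr_bind[OF K not_empty]) simp
  also have "\<dots> = P \<bind> (\<lambda>y. normal_measure (y \<bullet> u) (sqrt s2 * norm u))"
    by (simp add: slice_mech)
  also have "\<dots> = slice P u \<bind> (\<lambda>x. normal_measure x (sqrt s2 * norm u))"
    unfolding slice_def using measurable_normal_measure[of "sqrt s2 * norm u"] s2 u
    by (intro bind_distr[where K=borel, symmetric] not_empty) (auto simp: measurable_cong_sets[OF P(2) refl])
  finally show ?thesis .
qed

lemma AveSD_bind_gaussian_mech_le: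
  fixes P Q :: "'a::euclidean_space measure"
  assumes \<omega>: "slice_profile U \<omega>" and \<alpha>: "\<alpha> > 1" and s2: "s2 > 0"
    and P: "prob_space P" "sets P = sets borel" and Q: "prob_space Q" "sets Q = sets borel"
  shows "AveSD \<omega> \<alpha> (P \<bind> gaussian_mech id s2) (Q \<bind> gaussian_mech id s2)
    \<le> ennreal (\<alpha> / (2 * s2)) * (\<integral>\<^sup>+ u. (W_inf (slice P u) (slice Q u))\<^sup>2 \<partial>\<omega>)"
proof -
  have U: "U \<subseteq> sphere 0 1" and "prob_space \<omega>" "emeasure \<omega> U = 1"
    using \<omega> by (auto simp: slice_profile_def)
  then have "AE u in \<omega>. u \<in> U"
    by (intro prob_space.AE_prob_1) (auto simp: measure_def)
  then have "AveSD \<omega> \<alpha> (P \<bind> gaussian_mech id s2) (Q \<bind> gaussian_mech id s2)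
      \<le> (\<integral>\<^sup>+ u. ennreal (\<alpha> / (2 * s2)) * (W_inf (slice P u) (slice Q u))\<^sup>2 \<partial>\<omega>)"
    unfolding AveSD_def
  proof (intro nn_integral_mono_AE, elim eventually_mono)
    fix u assume "u \<in> U"
    then have "norm u = 1" "u \<noteq> 0"
      using U by auto
    then show "renyi_div \<alpha> (slice (P \<bind> gaussian_mech id s2) u) (slice (Q \<bind> gaussian_mech id s2) u)
        \<le> ennreal (\<alpha> / (2 * s2)) * (W_inf (slice P u) (slice Q u))\<^sup>2"
      using renyi_div_bind_normal_le_W_inf[of "sqrt s2" \<alpha> "slice P u" "slice Q u"] s2 \<alpha>
      by (simp add: slice_bind_gaussian_mech P Q)
  qed
  also have "\<dots> \<le> ennreal (\<alpha> / (2 * s2)) * (\<integral>\<^sup>+ u. (W_inf (slice P u) (slice Q u))\<^sup>2 \<partial>\<omega>)"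
    using \<alpha> s2 by (intro nn_integral_cmult_le) auto
  finally show ?thesis .
qed

lemma AveSD_eq_0_if_W_inf_null:
  fixes P Q :: "'a::euclidean_space measure"
  assumes \<omega>: "sets \<omega> = sets borel"
    and P: "prob_space P" "sets P = sets borel" and Q: "prob_space Q" "sets Q = sets borel"
    and null: "(\<integral>\<^sup>+ u. (W_inf (slice P u) (slice Q u))\<^sup>2 \<partial>\<omega>) = 0"
  shows "AveSD \<omega> \<alpha> P Q = 0"
proof -
  have gap: "(\<lambda>u. cdf_gap (slice P u) (slice Q u)) \<in> borel_measurable \<omega>"
    using borel_measurable_cdf_gap_slice[OF P Q] by (simp add: measurable_cong_sets[OF \<omega> refl])
  have "(\<integral>\<^sup>+ u. (cdf_gap (slice P u) (slice Q u))\<^sup>2 \<partial>\<omega>) \<le> 0"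
    unfolding null[symmetric] by (intro nn_integral_mono power_mono cdf_gap_le_W_inf) auto
  then have "AE u in \<omega>. cdf_gap (slice P u) (slice Q u) = 0"
    using gap by (simp add: nn_integral_0_iff_AE)
  then have "AE u in \<omega>. slice P u = slice Q u"
    by (elim eventually_mono) (rule eq_if_cdf_gap_eq_0[OF real_distribution_slice[OF P] real_distribution_slice[OF Q]])
  moreover have "renyi_div \<alpha> (slice Q u) (slice Q u) = 0" for u
    using real_distribution_slice[OF Q] by (simp add: real_distribution_def renyi_div_self)
  ultimately have "AveSD \<omega> \<alpha> P Q = (\<integral>\<^sup>+ u. 0 \<partial>\<omega>)"
    unfolding AveSD_def by (intro nn_integral_cong_AE) (auto elim!: eventually_mono)
  then show ?thesis
    by simp
qed

lemma AveSD_bind_gaussian_mech_calibrated: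
  fixes P Q :: "'a::euclidean_space measure"
  assumes \<omega>: "slice_profile U \<omega>" and \<alpha>: "\<alpha> > 1" and \<epsilon>: "\<epsilon> > 0"
    and P: "prob_space P" "sets P = sets borel" and Q: "prob_space Q" "sets Q = sets borel"
    and D: "D \<ge> 0" "(\<integral>\<^sup>+ u. (W_inf (slice P u) (slice Q u))\<^sup>2 \<partial>\<omega>) \<le> ennreal D"
  shows "AveSD \<omega> \<alpha> (P \<bind> gaussian_mech id (\<alpha> * D / (2 * \<epsilon>))) (Q \<bind> gaussian_mech id (\<alpha> * D / (2 * \<epsilon>)))
    \<le> ennreal \<epsilon>"
proof (cases "D = 0")
  case True
  have "sets \<omega> = sets borel"
    using \<omega> by (simp add: slice_profile_def)
  then have "AveSD \<omega> \<alpha> P Q = 0"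
    using D True by (intro AveSD_eq_0_if_W_inf_null P Q) auto
  then show ?thesis
    using True P Q by (simp add: bind_gaussian_mech_zero)
next
  case False
  define s2 where "s2 = \<alpha> * D / (2 * \<epsilon>)"
  have s2: "s2 > 0"
    using False D \<alpha> \<epsilon> by (simp add: s2_def)
  have "AveSD \<omega> \<alpha> (P \<bind> gaussian_mech id s2) (Q \<bind> gaussian_mech id s2)
      \<le> ennreal (\<alpha> / (2 * s2)) * (\<integral>\<^sup>+ u. (W_inf (slice P u) (slice Q u))\<^sup>2 \<partial>\<omega>)"
    by (rule AveSD_bind_gaussian_mech_le[OF \<omega> \<alpha> s2 P Q])
  also have "\<dots> \<le> ennreal (\<alpha> / (2 * s2)) * ennreal D"
    using D(2) by (rule mult_left_mono) simp
  also have "\<dots> = ennreal \<epsilon>"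
    using False D \<alpha> \<epsilon> by (simp add: s2_def ennreal_mult[symmetric] field_simps)
  finally show ?thesis
    unfolding s2_def .
qed

lemma sets_cond_secret [simp]: "sets (cond_secret \<theta> s) = sets \<theta>"
  by (simp add: cond_secret_def)

lemma prob_space_cond_secret:
  assumes "prob_space \<theta>" and pos: "prior_secret \<theta> s > 0"
  shows "prob_space (cond_secret \<theta> s)"
proof
  interpret prob_space \<theta> by fact
  define E where "E = secret_event \<theta> s"
  have "measure \<theta> E > 0"
    using pos by (simp add: prior_secret_def E_def)
  then have E: "E \<in> sets \<theta>" "emeasure \<theta> E \<noteq> 0"
    using measure_notin_sets[of E \<theta>] by (auto simp: emeasure_eq_measure)
  have "emeasure (cond_secret \<theta> s) (space (cond_secret \<theta> s)) = (\<integral>\<^sup>+ p. indicator E p \<partial>\<theta>) / emeasure \<theta> E"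
    unfolding cond_secret_def E_def[symmetric] using E
    by (simp add: emeasure_density nn_integral_divide)
  also have "\<dots> = 1"
    using E by (simp add: emeasure_eq_measure)
  finally show "emeasure (cond_secret \<theta> s) (space (cond_secret \<theta> s)) = 1" .
qed

lemma sets_query_law [simp]: "sets (query_law \<theta> f s) = sets borel"
  by (simp add: query_law_def)

context
  fixes S :: "'s set" and Q :: "('s \<times> 's) set" and \<Theta> :: "('s \<times> 'x) measure set"
    and Xsp :: "'x measure" and f :: "'x \<Rightarrow> 'a::euclidean_space" and \<theta> :: "('s \<times> 'x) measure"
  assumes scenario: "pufferfish_scenario S Q \<Theta> Xsp" and \<theta>: "\<theta> \<in> \<Theta>"
    and f: "f \<in> Xsp \<rightarrow>\<^sub>M borel"
begin

lemma measurable_query_cond_secret: "(\<lambda>p. f (snd p)) \<in> cond_secret \<theta> s \<rightarrow>\<^sub>M borel"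
proof -
  have sets_eq: "sets (cond_secret \<theta> s) = sets (count_space UNIV \<Otimes>\<^sub>M Xsp)"
    using scenario \<theta> by (simp add: pufferfish_scenario_def)
  show ?thesis
    by (subst measurable_cong_sets[OF sets_eq refl]) (rule measurable_compose[OF measurable_snd f])
qed

lemma prob_space_query_law:
  assumes "prior_secret \<theta> s > 0"
  shows "prob_space (query_law \<theta> f s)"
  unfolding query_law_def using scenario \<theta> assms
  by (intro prob_space.prob_space_distr prob_space_cond_secret measurable_query_cond_secret)
     (auto simp: pufferfish_scenario_def)

lemma mech_law_gaussian_mech:
  assumes "prior_secret \<theta> s > 0" and "s2 \<ge> 0"
  shows "mech_law \<theta> (gaussian_mech f s2) s = query_law \<theta> f s \<bind> gaussian_mech id s2"
proof -
  interpret prob_space "cond_secret \<theta> s"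
    using scenario \<theta> assms(1) by (intro prob_space_cond_secret) (auto simp: pufferfish_scenario_def)
  have "mech_law \<theta> (gaussian_mech f s2) s = cond_secret \<theta> s \<bind> (\<lambda>p. gaussian_mech id s2 (f (snd p)))"
    by (simp add: mech_law_def gaussian_mech_def)
  also have "\<dots> = query_law \<theta> f s \<bind> gaussian_mech id s2"
    unfolding query_law_def using measurable_gaussian_mech[OF assms(2) measurable_id]
    by (intro bind_distr[where K=borel, symmetric] measurable_query_cond_secret not_empty) (simp add: id_def)
  finally show ?thesis .
qed

end

lemma W_inf_le_slice_sens:
  assumes "\<theta> \<in> \<Theta>" "(si, sj) \<in> Q" "prior_secret \<theta> si > 0" "prior_secret \<theta> sj > 0"
  shows "W_inf (slice (query_law \<theta> f si) u) (slice (query_law \<theta> f sj) u) \<le> slice_sens Q \<Theta> f u"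
  unfolding slice_sens_def using assms by (intro SUP_upper2[where i="(\<theta>, si, sj)"]) auto

theorem theorem1:
  fixes S :: "'s set" and Q :: "('s \<times> 's) set" and \<Theta> :: "('s \<times> 'x) measure set"
    and Xsp :: "'x measure"
    and U :: "'a::euclidean_space set" and \<omega> :: "'a measure"
    and \<alpha> \<epsilon> :: real and f :: "'x \<Rightarrow> 'a"
  assumes "pufferfish_scenario S Q \<Theta> Xsp"
    and "slice_profile U \<omega>"
    and "\<alpha> > 1" and "\<epsilon> > 0"
    and "f \<in> Xsp \<rightarrow>\<^sub>M borel"
    and "(\<integral>\<^sup>+ u. (slice_sens Q \<Theta> f u)\<^sup>2 \<partial>\<omega>) < \<infinity>"
  shows "ave_srpp \<alpha> \<epsilon> \<omega> Q \<Theta>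
           (gaussian_mech f (\<alpha> * enn2real (\<integral>\<^sup>+ u. (slice_sens Q \<Theta> f u)\<^sup>2 \<partial>\<omega>) / (2 * \<epsilon>)))"
proof -
  define D where "D = enn2real (\<integral>\<^sup>+ u. (slice_sens Q \<Theta> f u)\<^sup>2 \<partial>\<omega>)"
  have D: "D \<ge> 0" "(\<integral>\<^sup>+ u. (slice_sens Q \<Theta> f u)\<^sup>2 \<partial>\<omega>) = ennreal D"
    using assms(6) by (auto simp: D_def ennreal_enn2real)
  show ?thesis
    unfolding ave_srpp_def D_def[symmetric]
  proof (intro ballI impI, clarify)
    fix \<theta> si sj
    assume \<theta>: "\<theta> \<in> \<Theta>" and "(si, sj) \<in> Q" and pos: "prior_secret \<theta> si > 0" "prior_secret \<theta> sj > 0"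
    then have "(\<integral>\<^sup>+ u. (W_inf (slice (query_law \<theta> f si) u) (slice (query_law \<theta> f sj) u))\<^sup>2 \<partial>\<omega>) \<le> ennreal D"
      unfolding D(2)[symmetric] by (intro nn_integral_mono power_mono W_inf_le_slice_sens) auto
    moreover have "\<alpha> * D / (2 * \<epsilon>) \<ge> 0"
      using assms(3,4) D(1) by simp
    ultimately show "AveSD \<omega> \<alpha> (mech_law \<theta> (gaussian_mech f (\<alpha> * D / (2 * \<epsilon>))) si)
        (mech_law \<theta> (gaussian_mech f (\<alpha> * D / (2 * \<epsilon>))) sj) \<le> ennreal \<epsilon>"
      using assms(1-5) \<theta> pos D(1)
      by (simp add: mech_law_gaussian_mech prob_space_query_law AveSD_bind_gaussian_mech_calibrated)
  qed
qed

end
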